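(* Let $d\ge1$ and let $S$ be an ordinary set. The functions $F:\mathbf H_d\to`S$ are in bijective correspondence with families $(p_s)_{s\in S}$ of pairwise orthogonal projections on $H_d=\mathbb C^d$ with $\sum_{s\in S}p_s=1$ (a projection-valued measurement), via $F(H_d,\mathbb C_s)=L(H_d,\mathbb C_s)\cdot p_s$ for each $s\in S$.
   Context: A quantum set $\mathcal X$ is a set $\mathrm{At}(\mathcal X)$ of nonzero finite-dimensional Hilbert spaces (atoms). A relation $R$ from $\mathcal X$ to $\mathcal Y$ is a choice of subspaces $R(X,Y)\subseteq L(X,Y)$ for all atoms. Composition: $(S\circ R)(X,Z)=\mathrm{span}\{sr: r\in R(X,Y), s\in S(Y,Z), Y\in\mathrm{At}(\mathcal Y)\}$; identity $I_{\mathcal X}(X,X)=\mathbb C 1_X$ and $0$ off the diagonal; adjoint $R^\dagger(Y,X)=\{r^\dagger: r\in R(X,Y)\}$; $R\le S$ iff $R(X,Y)\subseteq S(X,Y)$ for all atoms. A function $F:\mathcal X\to\mathcal Y$ is a relation with $F\circ F^\dagger\le I_{\mathcal Y}$ and $F^\dagger\circ F\ge I_{\mathcal X}$. $\mathbf H_d$ is the quantum set with single atom $H_d=\mathbb C^d$. For an ordinary set $S$, $`S$ is the quantum set with one one-dimensional atom $\mathbb C_s$ for each $s\in S$. Here $L(H_d,\mathbb C_s)\cdot p_s=\{ap_s : a\in L(H_d,\mathbb C_s)\}$. *)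

theory Defs
  imports "Jordan_Normal_Form.Schur_Decomposition"
begin

text \<open>Linear maps between atoms C^m -> C^n are represented by complex n x m matrices
  (JNF type complex mat).  A quantum set is a pair (At, dim): an index set of atoms
  together with the dimension of each atom (the atom indexed by x is C^(dim x)).\<close>

type_synonym 'i qset = "'i set \<times> ('i \<Rightarrow> nat)"

definition At :: "'i qset \<Rightarrow> 'i set" where "At X = fst X"
definition qdim :: "'i qset \<Rightarrow> 'i \<Rightarrow> nat" where "qdim X = snd X"

definition wf_qset :: "'i qset \<Rightarrow> bool" where
  "wf_qset X \<longleftrightarrow> (\<forall>x\<in>At X. qdim X x \<ge> 1)"

definition Lmaps :: "nat \<Rightarrow> nat \<Rightarrow> complex mat set" where
  "Lmaps m n = carrier_mat n m"

definition msubspace :: "nat \<Rightarrow> nat \<Rightarrow> complex mat set \<Rightarrow> bool" where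
  "msubspace m n V \<longleftrightarrow> V \<subseteq> Lmaps m n \<and> 0\<^sub>m n m \<in> V
     \<and> (\<forall>a\<in>V. \<forall>b\<in>V. a + b \<in> V) \<and> (\<forall>c. \<forall>a\<in>V. c \<cdot>\<^sub>m a \<in> V)"

definition mspan :: "nat \<Rightarrow> nat \<Rightarrow> complex mat set \<Rightarrow> complex mat set" where
  "mspan m n A = \<Inter>{V. msubspace m n V \<and> A \<subseteq> V}"

type_synonym ('i, 'j) qrel_t = "'i \<Rightarrow> 'j \<Rightarrow> complex mat set"

text \<open>A relation X -> Y: a subspace R x y of L(x,y) for all atoms (and {} outside atoms,
  to make relations extensional).\<close>
definition qrel :: "'i qset \<Rightarrow> 'j qset \<Rightarrow> ('i, 'j) qrel_t \<Rightarrow> bool" where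
  "qrel X Y R \<longleftrightarrow> (\<forall>x y. if x \<in> At X \<and> y \<in> At Y
       then msubspace (qdim X x) (qdim Y y) (R x y) else R x y = {})"

definition qcomp :: "'i qset \<Rightarrow> 'j qset \<Rightarrow> 'k qset \<Rightarrow> ('j, 'k) qrel_t \<Rightarrow> ('i, 'j) qrel_t
    \<Rightarrow> ('i, 'k) qrel_t" where
  "qcomp X Y Z S R = (\<lambda>x z. if x \<in> At X \<and> z \<in> At Z then
      mspan (qdim X x) (qdim Z z) {s * r | r s y. y \<in> At Y \<and> r \<in> R x y \<and> s \<in> S y z}
    else {})"

definition qid :: "'i qset \<Rightarrow> ('i, 'i) qrel_t" where
  "qid X = (\<lambda>x x'. if x \<in> At X \<and> x' \<in> At X then
      (if x = x' then {c \<cdot>\<^sub>m 1\<^sub>m (qdim X x) | c. True} else {0\<^sub>m (qdim X x') (qdim X x)})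
    else {})"

definition qadj :: "('i, 'j) qrel_t \<Rightarrow> ('j, 'i) qrel_t" where
  "qadj R = (\<lambda>y x. mat_adjoint ` R x y)"

definition qle :: "'i qset \<Rightarrow> 'j qset \<Rightarrow> ('i, 'j) qrel_t \<Rightarrow> ('i, 'j) qrel_t \<Rightarrow> bool" where
  "qle X Y R S \<longleftrightarrow> (\<forall>x\<in>At X. \<forall>y\<in>At Y. R x y \<subseteq> S x y)"

definition qfun :: "'i qset \<Rightarrow> 'j qset \<Rightarrow> ('i, 'j) qrel_t \<Rightarrow> bool" where
  "qfun X Y F \<longleftrightarrow> qrel X Y F
     \<and> qle Y Y (qcomp Y X Y F (qadj F)) (qid Y)
     \<and> qle X X (qid X) (qcomp X Y X (qadj F) F)"

definition qH :: "nat \<Rightarrow> unit qset" where "qH d = ({()}, \<lambda>_. d)"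
definition qclassical :: "'s set \<Rightarrow> 's qset" where "qclassical S = (S, \<lambda>_. 1)"

definition msum :: "nat \<Rightarrow> ('s \<Rightarrow> complex mat) \<Rightarrow> 's set \<Rightarrow> complex mat" where
  "msum d p A = mat d d (\<lambda>(i,j). \<Sum>s\<in>A. p s $$ (i,j))"

text \<open>Projection-valued measurements on C^d indexed by S (extensional: p s = 0 off S).
  The sum over S is the sum over the (finite) set of s with p s nonzero.\<close>
definition PVM :: "nat \<Rightarrow> 's set \<Rightarrow> ('s \<Rightarrow> complex mat) set" where
  "PVM d S = {p. (\<forall>s\<in>S. p s \<in> carrier_mat d d \<and> p s * p s = p s \<and> mat_adjoint (p s) = p s)
     \<and> (\<forall>s\<in>S. \<forall>t\<in>S. s \<noteq> t \<longrightarrow> p s * p t = 0\<^sub>m d d)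
     \<and> (\<forall>s. s \<notin> S \<longrightarrow> p s = 0\<^sub>m d d)
     \<and> finite {s\<in>S. p s \<noteq> 0\<^sub>m d d}
     \<and> msum d p {s\<in>S. p s \<noteq> 0\<^sub>m d d} = 1\<^sub>m d}"

definition pvm_to_fun :: "nat \<Rightarrow> 's set \<Rightarrow> ('s \<Rightarrow> complex mat) \<Rightarrow> (unit, 's) qrel_t" where
  "pvm_to_fun d S p = (\<lambda>x s. if x \<in> At (qH d) \<and> s \<in> S then
      {a * p s | a. a \<in> Lmaps d 1} else {})"

end

theory Submission
  imports Defs
begin

text \<open>Write \<open>V\<^sub>s\<close> for the space \<open>F(H\<^sub>d, \<complex>\<^sub>s)\<close> of \<open>1 \<times> d\<close> matrices (row vectors).
  For a function \<open>F\<close>, the condition \<open>F \<circ> F\<^sup>\<dagger> \<le> I\<close> says that the \<open>V\<^sub>s\<close> are pairwise orthogonal,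
  and \<open>F\<^sup>\<dagger> \<circ> F \<ge> I\<close> says that the identity lies in the span of the outer products \<open>u\<^sup>\<dagger> r\<close>
  with \<open>u, r \<in> V\<^sub>s\<close>. A PVM gives such spaces \<open>V\<^sub>s = L(H\<^sub>d, \<complex>) p\<^sub>s\<close>, and \<open>p\<^sub>s\<close> is recovered
  from \<open>V\<^sub>s\<close> as the orthogonal projection onto it. Conversely, for an orthogonal spanning
  family the projection onto \<open>V\<^sub>s\<close> is obtained without Gram-Schmidt: the matrices
  \<open>W + N\<close> with all rows of \<open>W\<close> in \<open>V\<^sub>s\<close> and \<open>N\<close> killing \<open>V\<^sub>s\<close> from both sides form a
  subspace containing every outer product, hence the identity, and in \<open>1 = W + N\<close> the
  summand \<open>W\<close> is the projection. Similar subspace arguments give that only finitely many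
  projections are nonzero and that they sum to the identity.\<close>

abbreviation adj :: "complex mat \<Rightarrow> complex mat" where "adj \<equiv> mat_adjoint"

lemma mat_adjoint_eq: "adj A = mat (dim_col A) (dim_row A) (\<lambda>(i,j). cnj (A $$ (j,i)))"
  unfolding mat_adjoint_def mat_of_rows_def by (rule eq_matI) auto

lemma mat_adjoint_dim [simp]: "dim_row (adj A) = dim_col A" "dim_col (adj A) = dim_row A"
  by (simp_all add: mat_adjoint_eq)

lemma mat_adjoint_index [simp]:
  "i < dim_col A \<Longrightarrow> j < dim_row A \<Longrightarrow> adj A $$ (i,j) = cnj (A $$ (j,i))"
  by (simp add: mat_adjoint_eq)

lemma mat_adjoint_carrier [simp]: "A \<in> carrier_mat n m \<Longrightarrow> adj A \<in> carrier_mat m n"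
  by (metis mat_adjoint_dim carrier_matD carrier_matI)

lemma mat_adjoint_adjoint [simp]: "adj (adj A) = A"
  by (rule eq_matI) simp_all

lemma mat_adjoint_mult:
  "A \<in> carrier_mat n m \<Longrightarrow> B \<in> carrier_mat m k \<Longrightarrow> adj (A * B) = adj B * adj A"
  by (rule eq_matI) (auto simp: scalar_prod_def cnj_sum mult.commute)

lemma mat_adjoint_one [simp]: "adj (1\<^sub>m n) = 1\<^sub>m n"
  by (rule eq_matI) auto

lemma mat_adjoint_zero [simp]: "adj (0\<^sub>m n m) = 0\<^sub>m m n"
  by (rule eq_matI) auto

lemma mat_adjoint_add:
  "A \<in> carrier_mat n m \<Longrightarrow> B \<in> carrier_mat n m \<Longrightarrow> adj (A + B) = adj A + adj B"
  by (rule eq_matI) auto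

lemma mat_adjoint_smult: "adj (c \<cdot>\<^sub>m A) = cnj c \<cdot>\<^sub>m adj A"
  by (rule eq_matI) auto

definition row_mat :: "complex mat \<Rightarrow> nat \<Rightarrow> complex mat" where
  "row_mat A k = mat 1 (dim_col A) (\<lambda>(_,j). A $$ (k,j))"

definition unit_row :: "nat \<Rightarrow> nat \<Rightarrow> complex mat" where
  "unit_row n k = mat 1 n (\<lambda>(_,j). if j = k then 1 else 0)"

lemma row_mat_carrier [simp]: "A \<in> carrier_mat n m \<Longrightarrow> row_mat A k \<in> carrier_mat 1 m"
  by (simp add: row_mat_def)

lemma row_mat_dim [simp]: "dim_row (row_mat A k) = 1" "dim_col (row_mat A k) = dim_col A"
  by (simp_all add: row_mat_def)

lemma row_mat_mult:
  "A \<in> carrier_mat n m \<Longrightarrow> B \<in> carrier_mat m l \<Longrightarrow> k < n \<Longrightarrow> row_mat (A * B) k = row_mat A k * B"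
  by (rule eq_matI) (auto simp: row_mat_def scalar_prod_def)

lemma row_mat_add:
  "A \<in> carrier_mat n m \<Longrightarrow> B \<in> carrier_mat n m \<Longrightarrow> k < n \<Longrightarrow> row_mat (A + B) k = row_mat A k + row_mat B k"
  by (rule eq_matI) (simp_all add: row_mat_def)

lemma row_mat_smult: "k < dim_row A \<Longrightarrow> row_mat (c \<cdot>\<^sub>m A) k = c \<cdot>\<^sub>m row_mat A k"
  by (rule eq_matI) (auto simp: row_mat_def)

lemma row_mat_zero [simp]: "k < n \<Longrightarrow> row_mat (0\<^sub>m n m) k = 0\<^sub>m 1 m"
  by (rule eq_matI) (auto simp: row_mat_def)

lemma unit_row_carrier [simp]: "unit_row n k \<in> carrier_mat 1 n"
  by (simp add: unit_row_def)

lemma unit_row_mult: "A \<in> carrier_mat n m \<Longrightarrow> k < n \<Longrightarrow> unit_row n k * A = row_mat A k"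
proof (rule eq_matI)
  fix i j assume A: "A \<in> carrier_mat n m" and k: "k < n"
    and i: "i < dim_row (row_mat A k)" and j: "j < dim_col (row_mat A k)"
  have "(\<Sum>l = 0..<n. (if l = k then 1 else 0) * A $$ (l, j)) = (\<Sum>l = 0..<n. if l = k then A $$ (l, j) else 0)"
    by (rule sum.cong) auto
  also have "\<dots> = A $$ (k,j)" using k by simp
  finally have "(\<Sum>l = 0..<n. (if l = k then 1 else 0) * A $$ (l, j)) = A $$ (k,j)" .
  then show "(unit_row n k * A) $$ (i, j) = row_mat A k $$ (i, j)"
    using A i j by (simp add: row_mat_def unit_row_def scalar_prod_def)
qed (simp_all add: row_mat_def unit_row_def)

lemma eq_mat_by_rows:
  assumes A: "A \<in> carrier_mat n m" and B: "B \<in> carrier_mat n m"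
    and rows: "\<And>k. k < n \<Longrightarrow> row_mat A k = row_mat B k"
  shows "A = B"
proof (rule eq_matI)
  fix i j assume i: "i < dim_row B" and j: "j < dim_col B"
  have "row_mat A i $$ (0,j) = row_mat B i $$ (0,j)" using rows i B by simp
  then show "A $$ (i,j) = B $$ (i,j)" using A B i j by (simp add: row_mat_def)
qed (use A B in simp_all)

lemma eq_zero_by_rows:
  "A \<in> carrier_mat n m \<Longrightarrow> (\<And>k. k < n \<Longrightarrow> row_mat A k = 0\<^sub>m 1 m) \<Longrightarrow> A = 0\<^sub>m n m"
  using eq_mat_by_rows[of A n m "0\<^sub>m n m"] by simp

lemma mult_adjoint_eq_zero_by_rows:
  assumes v: "v \<in> carrier_mat 1 d" and X: "X \<in> carrier_mat n d"
    and rows: "\<And>k. k < n \<Longrightarrow> v * adj (row_mat X k) = 0\<^sub>m 1 1"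
  shows "v * adj X = 0\<^sub>m 1 n"
proof (rule eq_matI)
  fix i k assume "i < dim_row (0\<^sub>m 1 n :: complex mat)" and "k < dim_col (0\<^sub>m 1 n :: complex mat)"
  then have i: "i = 0" and k: "k < n" by auto
  have "(v * adj X) $$ (i,k) = (v * adj (row_mat X k)) $$ (0,0)"
    using v X i k by (simp add: scalar_prod_def row_mat_def)
  then show "(v * adj X) $$ (i,k) = (0\<^sub>m 1 n :: complex mat) $$ (i,k)"
    using rows[OF k] i k by simp
qed (use v X in simp_all)

lemma scalar_mult_1x1: "A \<in> carrier_mat 1 1 \<Longrightarrow> r \<in> carrier_mat 1 m \<Longrightarrow> A * r = (A $$ (0,0)) \<cdot>\<^sub>m r"
  by (rule eq_matI) (auto simp: scalar_prod_def)

lemma carrier_mat_1x1_eq_scalars: "carrier_mat 1 1 = {c \<cdot>\<^sub>m 1\<^sub>m 1 :: complex mat |c. True}"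
proof (intro equalityI subsetI)
  fix A :: "complex mat" assume "A \<in> carrier_mat 1 1"
  then have "A = (A $$ (0,0)) \<cdot>\<^sub>m 1\<^sub>m 1" by (intro eq_matI) auto
  then show "A \<in> {c \<cdot>\<^sub>m 1\<^sub>m 1 |c. True}" by blast
qed auto

lemma msubspaceD:
  assumes "msubspace m n V"
  shows "V \<subseteq> carrier_mat n m" "0\<^sub>m n m \<in> V" "\<And>a b. a \<in> V \<Longrightarrow> b \<in> V \<Longrightarrow> a + b \<in> V"
    "\<And>a c. a \<in> V \<Longrightarrow> c \<cdot>\<^sub>m a \<in> V"
  using assms unfolding msubspace_def Lmaps_def by auto

lemma msubspaceI:
  assumes "V \<subseteq> carrier_mat n m" "0\<^sub>m n m \<in> V" "\<And>a b. a \<in> V \<Longrightarrow> b \<in> V \<Longrightarrow> a + b \<in> V"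
    "\<And>a c. a \<in> V \<Longrightarrow> c \<cdot>\<^sub>m a \<in> V"
  shows "msubspace m n V"
  using assms unfolding msubspace_def Lmaps_def by auto

lemma msubspace_carrier_mat: "msubspace m n (carrier_mat n m :: complex mat set)"
  by (rule msubspaceI) auto

lemma msubspace_zero: "msubspace m n {0\<^sub>m n m :: complex mat}"
  by (rule msubspaceI) auto

lemma msubspace_set_plus:
  assumes A: "msubspace m n A" and B: "msubspace m n B"
  shows "msubspace m n {a + b |a b. a \<in> A \<and> b \<in> B}"
proof (rule msubspaceI)
  note A' = msubspaceD[OF A] and B' = msubspaceD[OF B]
  show "{a + b |a b. a \<in> A \<and> b \<in> B} \<subseteq> carrier_mat n m"
    using A'(1) B'(1) by auto
  have "0\<^sub>m n m = 0\<^sub>m n m + (0\<^sub>m n m :: complex mat)" by simp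
  then show "0\<^sub>m n m \<in> {a + b |a b. a \<in> A \<and> b \<in> B}" using A'(2) B'(2) by blast
  fix x y assume "x \<in> {a + b |a b. a \<in> A \<and> b \<in> B}" "y \<in> {a + b |a b. a \<in> A \<and> b \<in> B}"
  then obtain a b a' b' where ab: "a \<in> A" "b \<in> B" "x = a + b" and ab': "a' \<in> A" "b' \<in> B" "y = a' + b'"
    by blast
  have "a \<in> carrier_mat n m" "a' \<in> carrier_mat n m" "b \<in> carrier_mat n m" "b' \<in> carrier_mat n m"
    using ab ab' A'(1) B'(1) by auto
  then have "x + y = (a + a') + (b + b')"
    using ab ab' by (intro eq_matI) auto
  then show "x + y \<in> {a + b |a b. a \<in> A \<and> b \<in> B}" using ab ab' A'(3) B'(3) by blast
next
  note A' = msubspaceD[OF A] and B' = msubspaceD[OF B]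
  fix x c assume "x \<in> {a + b |a b. a \<in> A \<and> b \<in> B}"
  then obtain a b where ab: "a \<in> A" "b \<in> B" "x = a + b" by blast
  have "c \<cdot>\<^sub>m x = c \<cdot>\<^sub>m a + c \<cdot>\<^sub>m b"
    using ab A'(1) B'(1) by (auto intro: add_smult_distrib_left_mat)
  then show "c \<cdot>\<^sub>m x \<in> {a + b |a b. a \<in> A \<and> b \<in> B}" using ab A'(4) B'(4) by blast
qed

lemma mem_mspan_iff: "x \<in> mspan m n A \<longleftrightarrow> (\<forall>V. msubspace m n V \<and> A \<subseteq> V \<longrightarrow> x \<in> V)"
  unfolding mspan_def by auto

lemma mspan_subset_iff: "msubspace m n V \<Longrightarrow> mspan m n A \<subseteq> V \<longleftrightarrow> A \<subseteq> V"
  unfolding mspan_def by auto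

lemma mult_mem_msubspace_by_rows:
  assumes V: "msubspace d 1 V" and w: "w \<in> carrier_mat n d"
    and rows: "\<And>k. k < n \<Longrightarrow> row_mat w k \<in> V" and a: "a \<in> carrier_mat 1 n"
  shows "a * w \<in> V"
proof -
  define P where "P m = mat 1 d (\<lambda>(_,j). \<Sum>k<m. a $$ (0,k) * w $$ (k,j))" for m
  have "m \<le> n \<Longrightarrow> P m \<in> V" for m
  proof (induction m)
    case 0
    have "P 0 = 0\<^sub>m 1 d" by (rule eq_matI) (auto simp: P_def)
    then show ?case using msubspaceD(2)[OF V] by simp
  next
    case (Suc m)
    have "P (Suc m) = P m + a $$ (0,m) \<cdot>\<^sub>m row_mat w m"
      using w by (intro eq_matI) (auto simp: P_def row_mat_def)
    then show ?case using Suc msubspaceD(3,4)[OF V] rows by simp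
  qed
  moreover have "P n = a * w"
    using a w by (intro eq_matI) (auto simp: P_def scalar_prod_def atLeast0LessThan)
  ultimately show ?thesis by (metis order_refl)
qed

lemma adjoint_mult_self_mem_msubspace:
  assumes E: "msubspace d d E" and X: "X \<in> carrier_mat n d"
    and rows: "\<And>k. k < n \<Longrightarrow> adj (row_mat X k) * row_mat X k \<in> E"
  shows "adj X * X \<in> E"
proof -
  define P where "P m = mat d d (\<lambda>(i,j). \<Sum>k<m. cnj (X $$ (k,i)) * X $$ (k,j))" for m
  have "m \<le> n \<Longrightarrow> P m \<in> E" for m
  proof (induction m)
    case 0
    have "P 0 = 0\<^sub>m d d" by (rule eq_matI) (auto simp: P_def)
    then show ?case using msubspaceD(2)[OF E] by simp
  next
    case (Suc m)
    have "P (Suc m) = P m + adj (row_mat X m) * row_mat X m"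
      using X by (intro eq_matI) (auto simp: P_def row_mat_def scalar_prod_def)
    then show ?case using Suc msubspaceD(3)[OF E] rows by simp
  qed
  moreover have "P n = adj X * X"
    using X by (intro eq_matI) (auto simp: P_def scalar_prod_def atLeast0LessThan)
  ultimately show ?thesis by (metis order_refl)
qed

lemma msum_carrier [simp]: "msum d p T \<in> carrier_mat d d"
  by (simp add: msum_def)

lemma msum_mem_msubspace:
  assumes E: "msubspace d d E" and T: "finite T" and p: "\<And>s. s \<in> T \<Longrightarrow> p s \<in> E"
  shows "msum d p T \<in> E"
  using T p
proof (induction T rule: finite_induct)
  case empty
  have "msum d p {} = 0\<^sub>m d d" by (rule eq_matI) (auto simp: msum_def)
  then show ?case using msubspaceD(2)[OF E] by simp
next
  case (insert s T)
  have "msum d p (insert s T) = p s + msum d p T"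
    using insert msubspaceD(1)[OF E] by (intro eq_matI) (auto simp: msum_def)
  then show ?case using insert msubspaceD(3)[OF E] by simp
qed

lemma msum_mult:
  assumes T: "finite T" and X: "X \<in> carrier_mat d n"
    and p: "\<And>s. s \<in> T \<Longrightarrow> p s \<in> carrier_mat d d"
  shows "msum d p T * X = mat d n (\<lambda>(i,j). \<Sum>s\<in>T. (p s * X) $$ (i,j))"
proof (rule eq_matI)
  fix i j assume "i < dim_row (mat d n (\<lambda>(i,j). \<Sum>s\<in>T. (p s * X) $$ (i,j)))"
    and "j < dim_col (mat d n (\<lambda>(i,j). \<Sum>s\<in>T. (p s * X) $$ (i,j)))"
  then have i: "i < d" and j: "j < n" by auto
  have "(msum d p T * X) $$ (i,j) = (\<Sum>k<d. \<Sum>s\<in>T. p s $$ (i,k) * X $$ (k,j))"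
    using i j X by (simp add: msum_def scalar_prod_def atLeast0LessThan sum_distrib_right)
  also have "\<dots> = (\<Sum>s\<in>T. \<Sum>k<d. p s $$ (i,k) * X $$ (k,j))"
    by (rule sum.swap)
  also have "\<dots> = (\<Sum>s\<in>T. (p s * X) $$ (i,j))"
  proof (rule sum.cong)
    fix s assume "s \<in> T"
    then have "p s \<in> carrier_mat d d" by (rule p)
    then show "(\<Sum>k<d. p s $$ (i,k) * X $$ (k,j)) = (p s * X) $$ (i,j)"
      using i j X by (simp add: scalar_prod_def atLeast0LessThan)
  qed simp
  finally show "(msum d p T * X) $$ (i,j) = mat d n (\<lambda>(i,j). \<Sum>s\<in>T. (p s * X) $$ (i,j)) $$ (i,j)"
    using i j by simp
qed (use X in \<open>simp_all add: msum_def\<close>)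

lemma At_qH [simp]: "At (qH d) = {()}" by (simp add: At_def qH_def)
lemma qdim_qH [simp]: "qdim (qH d) x = d" by (simp add: qdim_def qH_def)
lemma At_qclassical [simp]: "At (qclassical S) = S" by (simp add: At_def qclassical_def)
lemma qdim_qclassical [simp]: "qdim (qclassical S) s = 1" by (simp add: qdim_def qclassical_def)

definition outer_products :: "'s set \<Rightarrow> ('s \<Rightarrow> complex mat set) \<Rightarrow> complex mat set" where
  "outer_products S V = {adj u * r |u r s. s \<in> S \<and> u \<in> V s \<and> r \<in> V s}"

locale orthogonal_decomposition =
  fixes d :: nat and S :: "'s set" and V :: "'s \<Rightarrow> complex mat set"
  assumes subspace: "s \<in> S \<Longrightarrow> msubspace d 1 (V s)"
    and orthogonal: "\<lbrakk>s \<in> S; t \<in> S; s \<noteq> t; u \<in> V s; v \<in> V t\<rbrakk> \<Longrightarrow> v * adj u = 0\<^sub>m 1 1"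
    and one_mem_span: "1\<^sub>m d \<in> mspan d d (outer_products S V)"

lemma qrel_qH_qclassical_iff:
  "qrel (qH d) (qclassical S) F \<longleftrightarrow> (\<forall>s. s \<notin> S \<longrightarrow> F () s = {}) \<and> (\<forall>s\<in>S. msubspace d 1 (F () s))"
  by (auto simp: qrel_def)

lemma qcomp_qclassical_qH_qclassical:
  assumes "s \<in> S" "t \<in> S"
  shows "qcomp (qclassical S) (qH d) (qclassical S) F (qadj F) s t
     = mspan 1 1 {v * adj u |u v. u \<in> F () s \<and> v \<in> F () t}"
proof -
  have "{s' * r |r s'. r \<in> adj ` F () s \<and> s' \<in> F () t} = {v * adj u |u v. u \<in> F () s \<and> v \<in> F () t}"
    by blast
  then show ?thesis using assms by (simp add: qcomp_def qadj_def)
qed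

lemma qcomp_qH_qclassical_qH:
  "qcomp (qH d) (qclassical S) (qH d) (qadj F) F x y = mspan d d (outer_products S (F ()))"
  unfolding qcomp_def qadj_def outer_products_def by (auto intro!: arg_cong[where f = "mspan d d"])

lemma qcomp_qadj_le_qid_iff:
  assumes F: "qrel (qH d) (qclassical S) F"
  shows "qle (qclassical S) (qclassical S) (qcomp (qclassical S) (qH d) (qclassical S) F (qadj F))
      (qid (qclassical S))
    \<longleftrightarrow> (\<forall>s\<in>S. \<forall>t\<in>S. s \<noteq> t \<longrightarrow> (\<forall>u\<in>F () s. \<forall>v\<in>F () t. v * adj u = 0\<^sub>m 1 1))"
proof -
  have carrier: "F () s \<subseteq> carrier_mat 1 d" if "s \<in> S" for s
    using F that msubspaceD(1) by (auto simp: qrel_qH_qclassical_iff)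
  have "qcomp (qclassical S) (qH d) (qclassical S) F (qadj F) s t \<subseteq> qid (qclassical S) s t
      \<longleftrightarrow> (s \<noteq> t \<longrightarrow> (\<forall>u\<in>F () s. \<forall>v\<in>F () t. v * adj u = 0\<^sub>m 1 1))" if s: "s \<in> S" and t: "t \<in> S" for s t
  proof (cases "s = t")
    case True
    have "{v * adj u |u v. u \<in> F () s \<and> v \<in> F () t} \<subseteq> carrier_mat 1 1"
      using carrier[OF s] carrier[OF t] by fastforce
    then have "mspan 1 1 {v * adj u |u v. u \<in> F () s \<and> v \<in> F () t} \<subseteq> carrier_mat 1 1"
      using mspan_subset_iff[OF msubspace_carrier_mat] by blast
    moreover have "qid (qclassical S) s t = carrier_mat 1 1"
      using True s carrier_mat_1x1_eq_scalars by (simp add: qid_def)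
    ultimately show ?thesis using True s t by (simp add: qcomp_qclassical_qH_qclassical)
  next
    case False
    then show ?thesis using s t
      by (auto simp: qcomp_qclassical_qH_qclassical qid_def mspan_subset_iff[OF msubspace_zero])
  qed
  then show ?thesis by (auto simp: qle_def)
qed

lemma qid_le_qcomp_qadj_iff:
  "qle (qH d) (qH d) (qid (qH d)) (qcomp (qH d) (qclassical S) (qH d) (qadj F) F)
    \<longleftrightarrow> 1\<^sub>m d \<in> mspan d d (outer_products S (F ()))"
proof -
  have "c \<cdot>\<^sub>m 1\<^sub>m d \<in> mspan d d (outer_products S (F ()))"
    if "1\<^sub>m d \<in> mspan d d (outer_products S (F ()))" for c :: complex
    using that msubspaceD(4) by (auto simp: mem_mspan_iff)
  moreover have "1\<^sub>m d = (1 :: complex) \<cdot>\<^sub>m 1\<^sub>m d" by auto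
  ultimately show ?thesis
    by (auto simp: qle_def qid_def qcomp_qH_qclassical_qH)
qed

theorem qfun_qH_qclassical_iff:
  "qfun (qH d) (qclassical S) F \<longleftrightarrow> (\<forall>s. s \<notin> S \<longrightarrow> F () s = {}) \<and> orthogonal_decomposition d S (F ())"
proof (cases "qrel (qH d) (qclassical S) F")
  case True
  then show ?thesis
    unfolding qfun_def orthogonal_decomposition_def qcomp_qadj_le_qid_iff[OF True] qid_le_qcomp_qadj_iff
    by (auto simp: qrel_qH_qclassical_iff)
next
  case False
  then show ?thesis
    unfolding qfun_def orthogonal_decomposition_def by (auto simp: qrel_qH_qclassical_iff)
qed

definition row_space :: "nat \<Rightarrow> complex mat \<Rightarrow> complex mat set" where
  "row_space d P = {a * P |a. a \<in> Lmaps d 1}"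

lemma pvm_to_fun_apply: "pvm_to_fun d S p x s = (if s \<in> S then row_space d (p s) else {})"
  by (simp add: pvm_to_fun_def row_space_def)

lemma mem_row_space_iff: "v \<in> row_space d P \<longleftrightarrow> (\<exists>a \<in> carrier_mat 1 d. v = a * P)"
  by (auto simp: row_space_def Lmaps_def)

lemma row_mat_mem_row_space:
  assumes "P \<in> carrier_mat d d" "k < d" shows "row_mat P k \<in> row_space d P"
  unfolding mem_row_space_iff
proof
  show "row_mat P k = unit_row d k * P" using assms by (simp add: unit_row_mult)
qed (rule unit_row_carrier)

lemma row_space_msubspace:
  assumes P: "P \<in> carrier_mat d d"
  shows "msubspace d 1 (row_space d P)"
proof (rule msubspaceI)
  show "row_space d P \<subseteq> carrier_mat 1 d"
    using P by (auto simp: mem_row_space_iff)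
  have "0\<^sub>m 1 d = 0\<^sub>m 1 d * P" using P by simp
  then show "0\<^sub>m 1 d \<in> row_space d P"
    unfolding mem_row_space_iff by (intro bexI[of _ "0\<^sub>m 1 d"] zero_carrier_mat)
  fix x y assume "x \<in> row_space d P" "y \<in> row_space d P"
  then obtain a b where a: "a \<in> carrier_mat 1 d" "x = a * P" and b: "b \<in> carrier_mat 1 d" "y = b * P"
    by (auto simp: mem_row_space_iff)
  have "x + y = (a + b) * P" using a b P by (simp add: add_mult_distrib_mat)
  then show "x + y \<in> row_space d P"
    unfolding mem_row_space_iff using a b by (intro bexI[of _ "a + b"] add_carrier_mat)
next
  fix x c assume "x \<in> row_space d P"
  then obtain a where a: "a \<in> carrier_mat 1 d" "x = a * P"
    by (auto simp: mem_row_space_iff)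
  have "c \<cdot>\<^sub>m x = (c \<cdot>\<^sub>m a) * P" using a P by (simp add: mult_smult_assoc_mat)
  then show "c \<cdot>\<^sub>m x \<in> row_space d P"
    unfolding mem_row_space_iff using a by (intro bexI[of _ "c \<cdot>\<^sub>m a"] smult_carrier_mat)
qed

lemma mult_idempotent_eq_if_row_space_subset:
  assumes P: "P \<in> carrier_mat d d" and Q: "Q \<in> carrier_mat d d" and idem: "P * P = P"
    and sub: "row_space d Q \<subseteq> row_space d P"
  shows "Q * P = Q"
proof (rule eq_mat_by_rows)
  show "Q * P \<in> carrier_mat d d" "Q \<in> carrier_mat d d" using P Q by auto
  fix k assume k: "k < d"
  have "row_mat Q k \<in> row_space d P" using sub row_mat_mem_row_space[OF Q k] by blast
  then obtain a where a: "a \<in> carrier_mat 1 d" and row: "row_mat Q k = a * P"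
    by (auto simp: mem_row_space_iff)
  have "row_mat (Q * P) k = a * P * P" using Q P k by (simp add: row_mat_mult row)
  also have "\<dots> = a * P" using assoc_mult_mat[OF a P P] idem by simp
  finally show "row_mat (Q * P) k = row_mat Q k" by (simp add: row)
qed

lemma projection_eq_if_row_space_eq:
  assumes P: "P \<in> carrier_mat d d" and Q: "Q \<in> carrier_mat d d"
    and "P * P = P" "Q * Q = Q" "adj P = P" "adj Q = Q"
    and eq: "row_space d P = row_space d Q"
  shows "P = Q"
proof -
  have "Q * P = Q"
    using eq by (intro mult_idempotent_eq_if_row_space_subset[OF P Q \<open>P * P = P\<close>]) simp
  have "P * Q = P"
    using eq by (intro mult_idempotent_eq_if_row_space_subset[OF Q P \<open>Q * Q = Q\<close>]) simp
  have "Q = adj (Q * P)" using \<open>Q * P = Q\<close> \<open>adj Q = Q\<close> by simp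
  also have "\<dots> = P * Q" using P Q \<open>adj P = P\<close> \<open>adj Q = Q\<close> by (simp add: mat_adjoint_mult)
  finally show ?thesis using \<open>P * Q = P\<close> by simp
qed

lemma PVMD:
  assumes "p \<in> PVM d S"
  shows "s \<in> S \<Longrightarrow> p s \<in> carrier_mat d d"
    and "s \<in> S \<Longrightarrow> p s * p s = p s"
    and "s \<in> S \<Longrightarrow> adj (p s) = p s"
    and "s \<in> S \<Longrightarrow> t \<in> S \<Longrightarrow> s \<noteq> t \<Longrightarrow> p s * p t = 0\<^sub>m d d"
    and "s \<notin> S \<Longrightarrow> p s = 0\<^sub>m d d"
    and "finite {s\<in>S. p s \<noteq> 0\<^sub>m d d}"
    and "msum d p {s\<in>S. p s \<noteq> 0\<^sub>m d d} = 1\<^sub>m d"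
  using assms unfolding PVM_def by auto

lemma pvm_to_fun_inj_on: "inj_on (pvm_to_fun d S) (PVM d S)"
proof (rule inj_onI, rule ext)
  fix p q s assume p: "p \<in> PVM d S" and q: "q \<in> PVM d S" and eq: "pvm_to_fun d S p = pvm_to_fun d S q"
  show "p s = q s"
  proof (cases "s \<in> S")
    case True
    have "row_space d (p s) = row_space d (q s)"
      using fun_cong[OF fun_cong[OF eq, of "()"], of s] True by (simp add: pvm_to_fun_apply)
    then show ?thesis
      by (rule projection_eq_if_row_space_eq[OF PVMD(1)[OF p True] PVMD(1)[OF q True]
            PVMD(2)[OF p True] PVMD(2)[OF q True] PVMD(3)[OF p True] PVMD(3)[OF q True]])
  next
    case False
    then show ?thesis using PVMD(5)[OF p] PVMD(5)[OF q] by simp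
  qed
qed

lemma row_space_orthogonal:
  assumes P: "P \<in> carrier_mat d d" and Q: "Q \<in> carrier_mat d d" and "adj P = P" and QP: "Q * P = 0\<^sub>m d d"
    and u: "u \<in> row_space d P" and v: "v \<in> row_space d Q"
  shows "v * adj u = 0\<^sub>m 1 1"
proof -
  obtain a b where a: "a \<in> carrier_mat 1 d" "u = a * P" and b: "b \<in> carrier_mat 1 d" "v = b * Q"
    using u v by (auto simp: mem_row_space_iff)
  have aa: "adj a \<in> carrier_mat d 1" using a(1) by simp
  have "v * adj u = b * Q * (P * adj a)"
    using a b P \<open>adj P = P\<close> by (simp add: mat_adjoint_mult)
  also have "\<dots> = b * (Q * (P * adj a))" using b(1) Q mult_carrier_mat[OF P aa] by (rule assoc_mult_mat)
  also have "\<dots> = b * (Q * P * adj a)" using assoc_mult_mat[OF Q P aa] by simp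
  finally show ?thesis using QP a b by simp
qed

lemma projection_mem_msubspace:
  assumes E: "msubspace d d E" and P: "P \<in> carrier_mat d d" and "P * P = P" "adj P = P"
    and outer: "\<And>u. u \<in> row_space d P \<Longrightarrow> adj u * u \<in> E"
  shows "P \<in> E"
proof -
  have "adj P * P \<in> E"
    by (intro adjoint_mult_self_mem_msubspace[OF E P] outer row_mat_mem_row_space[OF P])
  then show ?thesis using assms by simp
qed

lemma pvm_to_fun_orthogonal_decomposition:
  assumes p: "p \<in> PVM d S"
  shows "orthogonal_decomposition d S (pvm_to_fun d S p ())"
proof (rule orthogonal_decomposition.intro)
  fix s assume s: "s \<in> S"
  show "msubspace d 1 (pvm_to_fun d S p () s)"
    using s row_space_msubspace[OF PVMD(1)[OF p s]] by (simp add: pvm_to_fun_apply)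
next
  fix s t u v assume s: "s \<in> S" and t: "t \<in> S" and "s \<noteq> t"
    and u: "u \<in> pvm_to_fun d S p () s" and v: "v \<in> pvm_to_fun d S p () t"
  have "p t * p s = 0\<^sub>m d d" using PVMD(4)[OF p t s] \<open>s \<noteq> t\<close> by blast
  moreover have "u \<in> row_space d (p s)" "v \<in> row_space d (p t)"
    using u v s t by (simp_all add: pvm_to_fun_apply)
  ultimately show "v * adj u = 0\<^sub>m 1 1"
    by (rule row_space_orthogonal[OF PVMD(1)[OF p s] PVMD(1)[OF p t] PVMD(3)[OF p s]])
next
  have "1\<^sub>m d \<in> E" if E: "msubspace d d E" and outer: "outer_products S (pvm_to_fun d S p ()) \<subseteq> E" for E
  proof -
    have ps: "p s \<in> E" if s: "s \<in> S" for s
    proof (rule projection_mem_msubspace[OF E PVMD(1-3)[OF p s]])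
      fix u assume "u \<in> row_space d (p s)"
      then have "adj u * u \<in> outer_products S (pvm_to_fun d S p ())"
        using s unfolding outer_products_def pvm_to_fun_apply by force
      then show "adj u * u \<in> E" using outer by blast
    qed
    have "msum d p {s\<in>S. p s \<noteq> 0\<^sub>m d d} \<in> E"
      by (rule msum_mem_msubspace[OF E PVMD(6)[OF p]]) (simp add: ps)
    then show ?thesis using PVMD(7)[OF p] by simp
  qed
  then show "1\<^sub>m d \<in> mspan d d (outer_products S (pvm_to_fun d S p ()))"
    by (simp add: mem_mspan_iff)
qed

context orthogonal_decomposition
begin

lemma V_carrier: "s \<in> S \<Longrightarrow> v \<in> V s \<Longrightarrow> v \<in> carrier_mat 1 d"
  using msubspaceD(1)[OF subspace] by blast

lemma one_mem_msubspace:
  assumes "msubspace d d E" and "\<And>s u r. s \<in> S \<Longrightarrow> u \<in> V s \<Longrightarrow> r \<in> V s \<Longrightarrow> adj u * r \<in> E"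
  shows "1\<^sub>m d \<in> E"
  using one_mem_span assms by (auto simp: mem_mspan_iff outer_products_def)

lemma outer_product_carrier: "s \<in> S \<Longrightarrow> u \<in> V s \<Longrightarrow> r \<in> V s \<Longrightarrow> adj u * r \<in> carrier_mat d d"
  using V_carrier by (meson mat_adjoint_carrier mult_carrier_mat)

lemma mult_outer_product_orthogonal:
  assumes "s \<in> S" "t \<in> S" "s \<noteq> t" "u \<in> V t" "r \<in> V t" "v \<in> V s"
  shows "v * (adj u * r) = 0\<^sub>m 1 d"
proof -
  have v: "v \<in> carrier_mat 1 d" and u: "adj u \<in> carrier_mat d 1" and r: "r \<in> carrier_mat 1 d"
    using assms V_carrier by auto
  have "v * (adj u * r) = (v * adj u) * r" using assoc_mult_mat[OF v u r] by simp
  then show ?thesis using assms orthogonal r by simp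
qed

definition rows_in :: "'s \<Rightarrow> complex mat set" where
  "rows_in s = {W \<in> carrier_mat d d. \<forall>k<d. row_mat W k \<in> V s}"

definition annihilators :: "'s \<Rightarrow> complex mat set" where
  "annihilators s = {N \<in> carrier_mat d d. \<forall>v\<in>V s. v * N = 0\<^sub>m 1 d \<and> v * adj N = 0\<^sub>m 1 d}"

lemma rows_in_msubspace: "s \<in> S \<Longrightarrow> msubspace d d (rows_in s)"
  using msubspaceD[OF subspace]
  by (intro msubspaceI) (auto simp: rows_in_def row_mat_add row_mat_smult)

lemma annihilators_msubspace:
  assumes s: "s \<in> S" shows "msubspace d d (annihilators s)"
proof (rule msubspaceI)
  show "annihilators s \<subseteq> carrier_mat d d" "0\<^sub>m d d \<in> annihilators s"
    by (auto simp: annihilators_def dest: V_carrier[OF s])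
  fix a b assume a: "a \<in> annihilators s" and b: "b \<in> annihilators s"
  then have ac: "a \<in> carrier_mat d d" and bc: "b \<in> carrier_mat d d" by (simp_all add: annihilators_def)
  have "v * (a + b) = 0\<^sub>m 1 d \<and> v * adj (a + b) = 0\<^sub>m 1 d" if v: "v \<in> V s" for v
    using a b v mult_add_distrib_mat[OF V_carrier[OF s v] ac bc]
      mult_add_distrib_mat[OF V_carrier[OF s v] mat_adjoint_carrier[OF ac] mat_adjoint_carrier[OF bc]]
    by (simp add: annihilators_def mat_adjoint_add[OF ac bc])
  then show "a + b \<in> annihilators s" using ac bc by (simp add: annihilators_def)
next
  fix a c assume a: "a \<in> annihilators s"
  then have ac: "a \<in> carrier_mat d d" by (simp add: annihilators_def)
  have "v * (c \<cdot>\<^sub>m a) = 0\<^sub>m 1 d \<and> v * adj (c \<cdot>\<^sub>m a) = 0\<^sub>m 1 d" if v: "v \<in> V s" for v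
    using a v mult_smult_distrib[OF V_carrier[OF s v] ac]
      mult_smult_distrib[OF V_carrier[OF s v] mat_adjoint_carrier[OF ac]]
    by (simp add: annihilators_def mat_adjoint_smult)
  then show "c \<cdot>\<^sub>m a \<in> annihilators s" using ac by (simp add: annihilators_def)
qed

lemma outer_product_mem_rows_in:
  assumes s: "s \<in> S" and u: "u \<in> V s" and r: "r \<in> V s"
  shows "adj u * r \<in> rows_in s"
proof -
  have uc: "adj u \<in> carrier_mat d 1" and rc: "r \<in> carrier_mat 1 d" using V_carrier s u r by auto
  have "row_mat (adj u * r) k \<in> V s" if "k < d" for k
  proof -
    have "row_mat (adj u * r) k = row_mat (adj u) k * r"
      by (rule row_mat_mult[OF uc rc that])
    also have "\<dots> = (row_mat (adj u) k $$ (0,0)) \<cdot>\<^sub>m r"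
      by (rule scalar_mult_1x1[OF row_mat_carrier[OF uc] rc])
    finally show ?thesis using msubspaceD(4)[OF subspace[OF s] r] by simp
  qed
  then show ?thesis using outer_product_carrier[OF s u r] by (simp add: rows_in_def)
qed

lemma outer_product_mem_annihilators:
  assumes s: "s \<in> S" and t: "t \<in> S" and "s \<noteq> t" and u: "u \<in> V t" and r: "r \<in> V t"
  shows "adj u * r \<in> annihilators s"
proof -
  have "adj (adj u * r) = adj r * u"
    using mat_adjoint_mult[OF mat_adjoint_carrier[OF V_carrier[OF t u]] V_carrier[OF t r]] by simp
  then have "v * (adj u * r) = 0\<^sub>m 1 d \<and> v * adj (adj u * r) = 0\<^sub>m 1 d" if "v \<in> V s" for v
    using mult_outer_product_orthogonal[OF s t \<open>s \<noteq> t\<close> u r that]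
      mult_outer_product_orthogonal[OF s t \<open>s \<noteq> t\<close> r u that] by simp
  then show ?thesis using outer_product_carrier[OF t u r] by (simp add: annihilators_def)
qed

lemma one_eq_rows_in_plus_annihilator:
  assumes s: "s \<in> S"
  shows "\<exists>W N. W \<in> rows_in s \<and> N \<in> annihilators s \<and> 1\<^sub>m d = W + N"
proof -
  have "1\<^sub>m d \<in> {W + N |W N. W \<in> rows_in s \<and> N \<in> annihilators s}"
  proof (rule one_mem_msubspace)
    show "msubspace d d {W + N |W N. W \<in> rows_in s \<and> N \<in> annihilators s}"
      using s by (intro msubspace_set_plus rows_in_msubspace annihilators_msubspace)
    fix t u r assume t: "t \<in> S" and u: "u \<in> V t" and r: "r \<in> V t"
    show "adj u * r \<in> {W + N |W N. W \<in> rows_in s \<and> N \<in> annihilators s}"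
    proof (cases "t = s")
      case True
      have "adj u * r = adj u * r + 0\<^sub>m d d" using outer_product_carrier[OF t u r] by simp
      then show ?thesis
        using True outer_product_mem_rows_in[OF t u r] msubspaceD(2)[OF annihilators_msubspace[OF s]]
        by blast
    next
      case False
      have "adj u * r = 0\<^sub>m d d + adj u * r" using outer_product_carrier[OF t u r] by simp
      then show ?thesis
        using False outer_product_mem_annihilators[OF s t _ u r] msubspaceD(2)[OF rows_in_msubspace[OF s]]
        by blast
    qed
  qed
  then show ?thesis by blast
qed

definition proj :: "'s \<Rightarrow> complex mat" where
  "proj s = (SOME W. W \<in> rows_in s \<and> (\<exists>N. N \<in> annihilators s \<and> 1\<^sub>m d = W + N))"

lemma proj_spec:
  assumes "s \<in> S"
  shows "proj s \<in> rows_in s \<and> (\<exists>N. N \<in> annihilators s \<and> 1\<^sub>m d = proj s + N)"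
proof -
  have "\<exists>W. W \<in> rows_in s \<and> (\<exists>N. N \<in> annihilators s \<and> 1\<^sub>m d = W + N)"
    using one_eq_rows_in_plus_annihilator[OF assms] by blast
  then show ?thesis unfolding proj_def by (rule someI_ex)
qed

lemma proj_carrier: "s \<in> S \<Longrightarrow> proj s \<in> carrier_mat d d"
  using proj_spec by (auto simp: rows_in_def)

lemma row_mat_proj: "s \<in> S \<Longrightarrow> k < d \<Longrightarrow> row_mat (proj s) k \<in> V s"
  using proj_spec by (auto simp: rows_in_def)

lemma mult_proj: assumes s: "s \<in> S" and v: "v \<in> V s" shows "v * proj s = v"
proof -
  obtain N where N: "N \<in> annihilators s" and one: "1\<^sub>m d = proj s + N" using proj_spec[OF s] by blast
  have vc: "v \<in> carrier_mat 1 d" and Nc: "N \<in> carrier_mat d d"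
    using V_carrier[OF s v] N by (auto simp: annihilators_def)
  have "v = v * (proj s + N)" using vc by (simp add: one[symmetric])
  also have "\<dots> = v * proj s"
    using mult_add_distrib_mat[OF vc proj_carrier[OF s] Nc] mult_carrier_mat[OF vc proj_carrier[OF s]] N v
    by (simp add: annihilators_def)
  finally show ?thesis by simp
qed

lemma adjoint_proj: assumes s: "s \<in> S" shows "adj (proj s) = proj s"
proof -
  obtain N where N: "N \<in> annihilators s" and one: "1\<^sub>m d = proj s + N" using proj_spec[OF s] by blast
  have P: "proj s \<in> carrier_mat d d" and Nc: "N \<in> carrier_mat d d" and P': "adj (proj s) \<in> carrier_mat d d"
    using proj_carrier[OF s] N by (auto simp: annihilators_def)
  have "proj s * adj N = 0\<^sub>m d d"
  proof (rule eq_zero_by_rows)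
    show "proj s * adj N \<in> carrier_mat d d" by (rule mult_carrier_mat[OF P mat_adjoint_carrier[OF Nc]])
    fix k assume k: "k < d"
    have "row_mat (proj s * adj N) k = row_mat (proj s) k * adj N"
      by (rule row_mat_mult[OF P mat_adjoint_carrier[OF Nc] k])
    then show "row_mat (proj s * adj N) k = 0\<^sub>m 1 d"
      using N row_mat_proj[OF s k] by (simp add: annihilators_def)
  qed
  then have "proj s * adj (proj s + N) = proj s * adj (proj s)"
    using mult_add_distrib_mat[OF P P' mat_adjoint_carrier[OF Nc]] mult_carrier_mat[OF P P']
    by (simp add: mat_adjoint_add[OF P Nc])
  then have sym: "proj s * adj (proj s) = proj s"
    using P by (simp add: one[symmetric])
  have "adj (proj s) = adj (proj s * adj (proj s))" by (simp only: sym)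
  also have "\<dots> = proj s * adj (proj s)" using mat_adjoint_mult[OF P P'] by simp
  finally show ?thesis using sym by simp
qed

lemma proj_idem: assumes s: "s \<in> S" shows "proj s * proj s = proj s"
proof (rule eq_mat_by_rows)
  show "proj s * proj s \<in> carrier_mat d d" "proj s \<in> carrier_mat d d"
    using proj_carrier[OF s] by auto
  fix k assume k: "k < d"
  show "row_mat (proj s * proj s) k = row_mat (proj s) k"
    using row_mat_mult[OF proj_carrier[OF s] proj_carrier[OF s] k] mult_proj[OF s row_mat_proj[OF s k]]
    by simp
qed

lemma row_space_proj: assumes s: "s \<in> S" shows "row_space d (proj s) = V s"
proof
  show "row_space d (proj s) \<subseteq> V s"
  proof
    fix x assume "x \<in> row_space d (proj s)"
    then obtain a where "a \<in> carrier_mat 1 d" "x = a * proj s" by (auto simp: mem_row_space_iff)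
    then show "x \<in> V s"
      using mult_mem_msubspace_by_rows[OF subspace[OF s] proj_carrier[OF s] row_mat_proj[OF s]] by simp
  qed
  show "V s \<subseteq> row_space d (proj s)"
  proof
    fix v assume v: "v \<in> V s"
    show "v \<in> row_space d (proj s)"
      unfolding mem_row_space_iff using mult_proj[OF s v] by (intro bexI[OF _ V_carrier[OF s v]]) simp
  qed
qed

lemma mult_adjoint_proj_orthogonal:
  assumes s: "s \<in> S" and t: "t \<in> S" and "s \<noteq> t" and v: "v \<in> V s"
  shows "v * adj (proj t) = 0\<^sub>m 1 d"
proof (rule mult_adjoint_eq_zero_by_rows[OF V_carrier[OF s v] proj_carrier[OF t]])
  fix k assume "k < d"
  show "v * adj (row_mat (proj t) k) = 0\<^sub>m 1 1"
    using \<open>s \<noteq> t\<close> by (intro orthogonal[OF t s _ row_mat_proj[OF t \<open>k < d\<close>] v]) simp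
qed

lemma proj_mult_proj_orthogonal:
  assumes s: "s \<in> S" and t: "t \<in> S" and "s \<noteq> t"
  shows "proj s * proj t = 0\<^sub>m d d"
proof (rule eq_zero_by_rows)
  show "proj s * proj t \<in> carrier_mat d d" by (rule mult_carrier_mat[OF proj_carrier[OF s] proj_carrier[OF t]])
  fix k assume k: "k < d"
  have "row_mat (proj s * proj t) k = row_mat (proj s) k * adj (proj t)"
    using row_mat_mult[OF proj_carrier[OF s] proj_carrier[OF t] k] adjoint_proj[OF t] by simp
  then show "row_mat (proj s * proj t) k = 0\<^sub>m 1 d"
    using mult_adjoint_proj_orthogonal[OF s t \<open>s \<noteq> t\<close> row_mat_proj[OF s k]] by simp
qed

definition cofinitely_annihilating :: "complex mat set" where
  "cofinitely_annihilating =
    {M \<in> carrier_mat d d. \<exists>T. finite T \<and> (\<forall>s\<in>S - T. \<forall>v\<in>V s. v * M = 0\<^sub>m 1 d)}"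

lemma cofinitely_annihilating_msubspace: "msubspace d d cofinitely_annihilating"
proof (rule msubspaceI)
  have "v * 0\<^sub>m d d = 0\<^sub>m 1 d" if "s \<in> S" "v \<in> V s" for s v
    using V_carrier[OF that] by simp
  then show "cofinitely_annihilating \<subseteq> carrier_mat d d" "0\<^sub>m d d \<in> cofinitely_annihilating"
    unfolding cofinitely_annihilating_def by (auto intro!: exI[of _ "{}"])
  fix a b assume "a \<in> cofinitely_annihilating" "b \<in> cofinitely_annihilating"
  then obtain Ta Tb where a: "a \<in> carrier_mat d d" "finite Ta" "\<forall>s\<in>S - Ta. \<forall>v\<in>V s. v * a = 0\<^sub>m 1 d"
    and b: "b \<in> carrier_mat d d" "finite Tb" "\<forall>s\<in>S - Tb. \<forall>v\<in>V s. v * b = 0\<^sub>m 1 d"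
    by (auto simp: cofinitely_annihilating_def)
  have "v * (a + b) = 0\<^sub>m 1 d" if "s \<in> S - (Ta \<union> Tb)" "v \<in> V s" for s v
    using that a b mult_add_distrib_mat[OF V_carrier[of s v] a(1) b(1)] by auto
  then show "a + b \<in> cofinitely_annihilating"
    using a b unfolding cofinitely_annihilating_def by (intro CollectI conjI exI[of _ "Ta \<union> Tb"]) auto
next
  fix a c assume "a \<in> cofinitely_annihilating"
  then obtain T where a: "a \<in> carrier_mat d d" "finite T" "\<forall>s\<in>S - T. \<forall>v\<in>V s. v * a = 0\<^sub>m 1 d"
    by (auto simp: cofinitely_annihilating_def)
  have "v * (c \<cdot>\<^sub>m a) = 0\<^sub>m 1 d" if "s \<in> S - T" "v \<in> V s" for s v
    using that a mult_smult_distrib[OF V_carrier[of s v] a(1)] by auto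
  then show "c \<cdot>\<^sub>m a \<in> cofinitely_annihilating"
    using a unfolding cofinitely_annihilating_def by (intro CollectI conjI exI[of _ T]) auto
qed

lemma finite_nonzero_proj: "finite {s\<in>S. proj s \<noteq> 0\<^sub>m d d}"
proof -
  have "adj u * r \<in> cofinitely_annihilating" if "t \<in> S" "u \<in> V t" "r \<in> V t" for t u r
    using that outer_product_carrier mult_outer_product_orthogonal
    unfolding cofinitely_annihilating_def by (intro CollectI conjI exI[of _ "{t}"]) auto
  then have "1\<^sub>m d \<in> cofinitely_annihilating"
    by (rule one_mem_msubspace[OF cofinitely_annihilating_msubspace])
  then obtain T where T: "finite T" "\<forall>s\<in>S - T. \<forall>v\<in>V s. v * 1\<^sub>m d = 0\<^sub>m 1 d"
    by (auto simp: cofinitely_annihilating_def)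
  have "proj s = 0\<^sub>m d d" if s: "s \<in> S - T" for s
  proof (rule eq_zero_by_rows)
    show "proj s \<in> carrier_mat d d" using s proj_carrier by simp
    fix k assume "k < d"
    then have row: "row_mat (proj s) k \<in> V s" using s row_mat_proj by simp
    then have "row_mat (proj s) k \<in> carrier_mat 1 d" using s V_carrier by blast
    then have "row_mat (proj s) k = row_mat (proj s) k * 1\<^sub>m d" by (rule right_mult_one_mat[symmetric])
    also have "\<dots> = 0\<^sub>m 1 d" using s T(2) row by blast
    finally show "row_mat (proj s) k = 0\<^sub>m 1 d" .
  qed
  then have "{s\<in>S. proj s \<noteq> 0\<^sub>m d d} \<subseteq> T" by blast
  then show ?thesis using T(1) by (rule finite_subset)
qed

definition pvm :: "'s \<Rightarrow> complex mat" where
  "pvm s = (if s \<in> S then proj s else 0\<^sub>m d d)"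

lemma nonzero_pvm_eq: "{s\<in>S. pvm s \<noteq> 0\<^sub>m d d} = {s\<in>S. proj s \<noteq> 0\<^sub>m d d}"
  by (auto simp: pvm_def)

lemma pvm_mult_adjoint:
  assumes t: "t \<in> S" and u: "u \<in> V t" and s: "s \<in> S"
  shows "pvm s * adj u = (if s = t then adj u else 0\<^sub>m d 1)"
proof -
  have "pvm s * adj u = adj (u * adj (proj s))"
    using s mat_adjoint_mult[OF V_carrier[OF t u] mat_adjoint_carrier[OF proj_carrier[OF s]]]
    by (simp add: pvm_def)
  then show ?thesis
    using t u s adjoint_proj mult_proj mult_adjoint_proj_orthogonal by auto
qed

lemma msum_pvm_mult_adjoint:
  assumes t: "t \<in> S" and u: "u \<in> V t"
  shows "msum d pvm {s\<in>S. pvm s \<noteq> 0\<^sub>m d d} * adj u = adj u"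
proof -
  let ?Z = "{s\<in>S. pvm s \<noteq> 0\<^sub>m d d}"
  have finite: "finite ?Z" using finite_nonzero_proj by (simp only: nonzero_pvm_eq)
  have uc: "adj u \<in> carrier_mat d 1" using V_carrier[OF t u] by simp
  have zero: "adj u = 0\<^sub>m d 1" if "t \<notin> ?Z"
  proof -
    have "u = u * pvm t" using mult_proj[OF t u] t by (simp add: pvm_def)
    then show ?thesis using that t V_carrier[OF t u] by simp
  qed
  have entry: "(\<Sum>s\<in>?Z. (pvm s * adj u) $$ (i,j)) = adj u $$ (i,j)" if ij: "i < d" "j < 1" for i j
  proof -
    have "(\<Sum>s\<in>?Z. (pvm s * adj u) $$ (i,j)) = (\<Sum>s\<in>?Z. if s = t then adj u $$ (i,j) else 0)"
      using ij by (intro sum.cong) (auto simp: pvm_mult_adjoint[OF t u])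
    also have "\<dots> = adj u $$ (i,j)" using finite zero ij by auto
    finally show ?thesis .
  qed
  have "s \<in> ?Z \<Longrightarrow> pvm s \<in> carrier_mat d d" for s using proj_carrier by (simp add: pvm_def)
  then have "msum d pvm ?Z * adj u = mat d 1 (\<lambda>(i,j). \<Sum>s\<in>?Z. (pvm s * adj u) $$ (i,j))"
    by (rule msum_mult[OF finite uc])
  also have "\<dots> = adj u" using entry V_carrier[OF t u] by (intro eq_matI) auto
  finally show ?thesis .
qed

lemma msum_pvm: "msum d pvm {s\<in>S. pvm s \<noteq> 0\<^sub>m d d} = 1\<^sub>m d"
proof -
  let ?M = "msum d pvm {s\<in>S. pvm s \<noteq> 0\<^sub>m d d}"
  have M: "?M \<in> carrier_mat d d" by simp
  have "msubspace d d {A \<in> carrier_mat d d. ?M * A = A}"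
    by (intro msubspaceI) (auto simp: mult_add_distrib_mat[OF M] mult_smult_distrib[OF M] right_mult_zero_mat[OF M])
  moreover have "?M * (adj u * r) = adj u * r" if "t \<in> S" "u \<in> V t" "r \<in> V t" for t u r
    using assoc_mult_mat[OF M mat_adjoint_carrier[OF V_carrier[OF that(1,2)]] V_carrier[OF that(1,3)]]
      msum_pvm_mult_adjoint[OF that(1,2)] by simp
  ultimately have "1\<^sub>m d \<in> {A \<in> carrier_mat d d. ?M * A = A}"
    using outer_product_carrier by (intro one_mem_msubspace) auto
  then show ?thesis using M by simp
qed

lemma pvm_PVM: "pvm \<in> PVM d S"
  unfolding PVM_def
proof (intro CollectI conjI ballI allI impI)
  fix s assume s: "s \<in> S"
  show "pvm s \<in> carrier_mat d d" "pvm s * pvm s = pvm s" "adj (pvm s) = pvm s"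
    using s proj_carrier proj_idem adjoint_proj by (simp_all add: pvm_def)
next
  fix s t assume "s \<in> S" "t \<in> S" "s \<noteq> t"
  then show "pvm s * pvm t = 0\<^sub>m d d" using proj_mult_proj_orthogonal by (simp add: pvm_def)
next
  fix s assume "s \<notin> S"
  then show "pvm s = 0\<^sub>m d d" by (simp add: pvm_def)
next
  show "finite {s\<in>S. pvm s \<noteq> 0\<^sub>m d d}" using finite_nonzero_proj by (simp only: nonzero_pvm_eq)
  show "msum d pvm {s\<in>S. pvm s \<noteq> 0\<^sub>m d d} = 1\<^sub>m d" by (rule msum_pvm)
qed

lemma pvm_to_fun_pvm: "s \<in> S \<Longrightarrow> pvm_to_fun d S pvm x s = V s"
  by (simp add: pvm_to_fun_apply pvm_def row_space_proj)

end

theorem mainTheorem14: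
  fixes d :: nat and S :: "'s set"
  assumes "d \<ge> 1"
  shows "bij_betw (pvm_to_fun d S) (PVM d S) {F. qfun (qH d) (qclassical S) F}"
proof -
  have "F \<in> pvm_to_fun d S ` PVM d S" if "qfun (qH d) (qclassical S) F" for F
  proof -
    interpret orthogonal_decomposition d S "F ()"
      using that by (simp add: qfun_qH_qclassical_iff)
    have "pvm_to_fun d S pvm x s = F x s" for x s
      using that pvm_to_fun_pvm[of s x]
      by (cases x, cases "s \<in> S") (auto simp: qfun_qH_qclassical_iff pvm_to_fun_apply)
    then have "pvm_to_fun d S pvm = F" by (intro ext)
    then show ?thesis by (intro rev_image_eqI[OF pvm_PVM]) simp
  qed
  moreover have "qfun (qH d) (qclassical S) (pvm_to_fun d S p)" if "p \<in> PVM d S" for p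
    using that pvm_to_fun_orthogonal_decomposition by (auto simp: qfun_qH_qclassical_iff pvm_to_fun_apply)
  ultimately show ?thesis
    unfolding bij_betw_def using pvm_to_fun_inj_on by blast
qed

end
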